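(* Let $n=p^2$ where $p$ is prime. Let $\mathcal{C}$ be the code obtained from $\mathcal{C}(r=p,p,S=\{0,1,2,3,4\})$ by appending one global parity bit equal to the sum modulo 2 of all $n$ information bits. Then $\mathcal{C}$ is a binary $5$-batch code of dimension $n$ with redundancy $5p+1=\Theta(\sqrt n)$, and therefore $r_B(n,5)=\Theta(\sqrt n)$.
   Context: Array construction: for positive integers $r,p$ with $n=rp$ and $S=\{s_0<\dots<s_{k-1}\}\subseteq\{0,\dots,p-1\}$, let $D_{s,t}=\{(i,\langle t+is\rangle_p): i=0,\dots,r-1\}$ for $s,t\in\{0,\dots,p-1\}$, where $\langle x\rangle_p=x\bmod p$. An information vector $\boldsymbol{x}\in\{0,1\}^n$ is written as an array $(x_{i,j})$, $(i,j)\in\{0,\dots,r-1\}\times\{0,\dots,p-1\}$, and redundancy bits $\rho_{\ell,t}=\sum_{(i,j)\in D_{s_\ell,t}}x_{i,j}\pmod2$ are added for $\ell\in\{0,\dots,k-1\}$, $t\in\{0,\dots,p-1\}$; $\mathcal{C}(r,p,S)$ is the binary code of all words $(\boldsymbol{x},(\rho_{\ell,t}))$. A binary linear code of length $N$ encoding $n$ information bits is a $k$-batch code if for every multiset $\{i_1,\dots,i_k\}$ of information indices there exist $k$ mutually disjoint sets $R_1,\dots,R_k$ of coordinates such that $x_{i_j}$ is a function of the codeword bits indexed by $R_j$; its redundancy is $N-n$, and $r_B(n,k)$ is the minimum redundancy of a binary $k$-batch code of dimension $n$. *)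

theory Defs
  imports Complex_Main "HOL-Library.Z2" "HOL-Computational_Algebra.Primes"
begin

definition words :: "nat \<Rightarrow> (nat \<Rightarrow> bit) set" where
  "words m = {x. \<forall>i\<ge>m. x i = 0}"

definition linear_code :: "nat \<Rightarrow> nat \<Rightarrow> ((nat \<Rightarrow> bit) \<Rightarrow> (nat \<Rightarrow> bit)) \<Rightarrow> bool" where
  "linear_code n N E \<longleftrightarrow>
     (\<forall>x\<in>words n. E x \<in> words N) \<and>
     (\<forall>x\<in>words n. \<forall>y\<in>words n. E (\<lambda>i. x i + y i) = (\<lambda>c. E x c + E y c)) \<and>
     inj_on E (words n)"

definition recovers :: "nat \<Rightarrow> ((nat \<Rightarrow> bit) \<Rightarrow> (nat \<Rightarrow> bit)) \<Rightarrow> nat set \<Rightarrow> nat \<Rightarrow> bool" where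
  "recovers n E R i \<longleftrightarrow>
     (\<forall>x\<in>words n. \<forall>y\<in>words n. (\<forall>c\<in>R. E x c = E y c) \<longrightarrow> x i = y i)"

(* k-batch code: every request i_1,...,i_k (a list of length k, possibly with
   repetitions, i.e. any multiset in any order) admits k mutually disjoint
   recovering sets of coordinates. *)
definition batch_code :: "nat \<Rightarrow> nat \<Rightarrow> nat \<Rightarrow> ((nat \<Rightarrow> bit) \<Rightarrow> (nat \<Rightarrow> bit)) \<Rightarrow> bool" where
  "batch_code n N k E \<longleftrightarrow> linear_code n N E \<and>
     (\<forall>is. length is = k \<and> set is \<subseteq> {..<n} \<longrightarrow>
        (\<exists>R :: nat \<Rightarrow> nat set.
            (\<forall>j<k. R j \<subseteq> {..<N}) \<and>
            (\<forall>j<k. \<forall>j'<k. j \<noteq> j' \<longrightarrow> R j \<inter> R j' = {}) \<and>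
            (\<forall>j<k. recovers n E (R j) (is ! j))))"

definition r_B :: "nat \<Rightarrow> nat \<Rightarrow> nat" where
  "r_B n k = (LEAST r. \<exists>N E. n \<le> N \<and> N - n = r \<and> batch_code n N k E)"

definition D :: "nat \<Rightarrow> nat \<Rightarrow> nat \<Rightarrow> nat \<Rightarrow> (nat \<times> nat) set" where
  "D r p s t = {(i, (t + i * s) mod p) | i. i < r}"

(* Information bit x_{i,j} sits at coordinate i*p + j (0 <= i < r, 0 <= j < p);
   redundancy bit rho_{l,t} sits at coordinate r*p + l*p + t. *)
definition array_code :: "nat \<Rightarrow> nat \<Rightarrow> nat list \<Rightarrow> (nat \<Rightarrow> bit) \<Rightarrow> (nat \<Rightarrow> bit)" where
  "array_code r p S x c =
     (if c < r * p then x c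
      else if c < r * p + length S * p then
        (let l = (c - r * p) div p; t = (c - r * p) mod p in
           \<Sum>(i, j)\<in>D r p (S ! l) t. x (i * p + j))
      else 0)"

definition array_code_parity :: "nat \<Rightarrow> nat \<Rightarrow> nat list \<Rightarrow> (nat \<Rightarrow> bit) \<Rightarrow> (nat \<Rightarrow> bit)" where
  "array_code_parity r p S x c =
     (if c = r * p + length S * p then (\<Sum>a<r * p. x a) else array_code r p S x c)"

end

(*
  A minimal set A of coordinates that determines the information word carries a
  dual basis z_b (b in A), and counting gives |A| >= n, so its complement T has at most N - n
  coordinates.  Three disjoint recovery sets for bit i, each reduced to a parity of codeword
  bits, write z_b(i) as the majority of three parities; as b lies in at most one of them, that
  majority is a quadratic form in the T-coordinates of the codeword of z_b, with coefficients
  independent of b.  Distinct sets of information bits give distinct forms, hence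
  2^n <= 2^(|T|^2) and n <= (N - n)^2.

  Bit i * p + j is the point (i, j) of the grid Z_p x Z_p and the redundancy bits
  are the parities of the lines of slopes 0, ..., 4, so a point is recovered by itself or by a
  line through it without the point; two lines of distinct slopes meet in exactly one point.
  A request of five points either repeats only one point (lines through it of slopes missing
  the other points), or consists of three points asked at most twice (lines of one slope
  separating them), or of two points P, Q asked three and two times: then P uses lines of two
  slopes, and the line through Q of a third slope crosses them in points U and V, which are
  read along the other two slopes instead.
*)
theory Submission
  imports Defs "HOL-Library.Disjoint_Sets"
begin

section \<open>Binary vectors\<close>

(* Keep sums and products of bits in field form instead of boolean xor and conjunction. *)
declare add_bit_eq_xor [simp del] mult_bit_eq_and [simp del]

lemma bit_add_eq_0_iff: "(a::bit) + b = 0 \<longleftrightarrow> a = b"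
  by (cases a; cases b) simp_all

lemma bit_add_eq_1_iff: "(a::bit) + b = 1 \<longleftrightarrow> a \<noteq> b"
  by (cases a; cases b) simp_all

lemma bit_majority:
  fixes z y\<^sub>0 y\<^sub>1 y\<^sub>2 :: bit
  assumes "\<not> (u\<^sub>0 \<and> u\<^sub>1)" "\<not> (u\<^sub>0 \<and> u\<^sub>2)" "\<not> (u\<^sub>1 \<and> u\<^sub>2)"
    and "z = (if u\<^sub>0 then 1 else 0) + y\<^sub>0" "z = (if u\<^sub>1 then 1 else 0) + y\<^sub>1"
      "z = (if u\<^sub>2 then 1 else 0) + y\<^sub>2"
  shows "z = y\<^sub>0 * y\<^sub>1 + y\<^sub>0 * y\<^sub>2 + y\<^sub>1 * y\<^sub>2"
  using assms by (cases y\<^sub>0; cases y\<^sub>1; cases y\<^sub>2; cases u\<^sub>0; cases u\<^sub>1; cases u\<^sub>2) simp_all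

definition supported_on :: "'a set \<Rightarrow> ('a \<Rightarrow> bit) set" where
  "supported_on A = {f. \<forall>a. a \<notin> A \<longrightarrow> f a = 0}"

lemma words_eq_supported_on: "words n = supported_on {..<n}"
  by (auto simp: words_def supported_on_def)

lemma words_add: "x \<in> words n \<Longrightarrow> y \<in> words n \<Longrightarrow> (\<lambda>i. x i + y i) \<in> words n"
  by (simp add: words_def)

lemma words_sum: "\<forall>k\<in>K. w k \<in> words n \<Longrightarrow> (\<lambda>i. \<Sum>k\<in>K. w k i) \<in> words n"
  by (simp add: words_def)

lemma card_supported_on:
  assumes "finite A"
  shows "finite (supported_on A)" "card (supported_on A) = 2 ^ card A"
proof -
  have b: "bij_betw (\<lambda>S a. if a \<in> S then 1 else 0) (Pow A) (supported_on A)"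
  proof (rule bij_betw_byWitness[where f' = "\<lambda>f. {a\<in>A. f a = 1}"])
    show "\<forall>f\<in>supported_on A. (\<lambda>a. if a \<in> {a \<in> A. f a = 1} then 1 else 0) = f"
      by (auto simp: supported_on_def fun_eq_iff)
  qed (auto simp: supported_on_def)
  show "finite (supported_on A)"
    using bij_betw_finite[OF b] assms by simp
  show "card (supported_on A) = 2 ^ card A"
    using bij_betw_same_card[OF b] assms by (simp add: card_Pow)
qed

section \<open>Dual bases and recovery sets of binary linear codes\<close>

lemma finite_minimal_subset:
  assumes "finite R" "P R"
  obtains R' where "R' \<subseteq> R" "P R'" "\<forall>c\<in>R'. \<not> P (R' - {c})"
  using assms
proof (induction "card R" arbitrary: R rule: less_induct)
  case less
  show ?case
  proof (cases "\<exists>c\<in>R. P (R - {c})")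
    case True
    then obtain c where "c \<in> R" "P (R - {c})" by blast
    then show ?thesis
      using less.hyps[of "R - {c}"] less.prems card_Diff1_less[OF less.prems(2)] by blast
  qed (use less.prems in blast)
qed

lemma recovers_mono: "recovers n E R P \<Longrightarrow> R \<subseteq> R' \<Longrightarrow> recovers n E R' P"
  unfolding recovers_def by blast

definition determines :: "nat \<Rightarrow> ((nat \<Rightarrow> bit) \<Rightarrow> nat \<Rightarrow> bit) \<Rightarrow> nat set \<Rightarrow> bool" where
  "determines n E A \<longleftrightarrow> (\<forall>x\<in>words n. \<forall>y\<in>words n. (\<forall>a\<in>A. E x a = E y a) \<longrightarrow> x = y)"

definition dual_family ::
  "nat \<Rightarrow> ((nat \<Rightarrow> bit) \<Rightarrow> nat \<Rightarrow> bit) \<Rightarrow> nat set \<Rightarrow> (nat \<Rightarrow> nat \<Rightarrow> bit) \<Rightarrow> bool" where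
  "dual_family n E A z \<longleftrightarrow> (\<forall>b\<in>A. z b \<in> words n \<and> (\<forall>a\<in>A. E (z b) a = (if a = b then 1 else 0)))"

lemma card_ge_if_determines:
  assumes "finite A" "determines n E A"
  shows "n \<le> card A"
proof -
  define restr where "restr x = (\<lambda>a. if a \<in> A then E x a else 0)" for x
  have "inj_on restr (words n)"
    using assms(2) by (intro inj_onI) (metis determines_def restr_def)
  moreover have "restr ` words n \<subseteq> supported_on A"
    by (auto simp: restr_def supported_on_def)
  ultimately have "card (words n) \<le> card (supported_on A)"
    using card_inj_on_le card_supported_on(1)[OF assms(1)] by blast
  then have "(2::nat) ^ n \<le> 2 ^ card A"
    by (simp add: words_eq_supported_on card_supported_on assms(1))
  then show ?thesis by simp
qed

context
  fixes n N :: nat and E :: "(nat \<Rightarrow> bit) \<Rightarrow> nat \<Rightarrow> bit"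
  assumes linear: "linear_code n N E"
begin

lemma linear_code_add:
  "x \<in> words n \<Longrightarrow> y \<in> words n \<Longrightarrow> E (\<lambda>i. x i + y i) = (\<lambda>c. E x c + E y c)"
  using linear unfolding linear_code_def by blast

lemma linear_code_sum:
  assumes "finite K" "\<forall>k\<in>K. w k \<in> words n"
  shows "E (\<lambda>i. \<Sum>k\<in>K. w k i) = (\<lambda>c. \<Sum>k\<in>K. E (w k) c)"
  using assms
proof (induction K rule: finite_induct)
  case empty
  have "E (\<lambda>_. 0) = (\<lambda>c. E (\<lambda>_. 0) c + E (\<lambda>_. 0) c)"
    using linear_code_add[of "\<lambda>_. 0" "\<lambda>_. 0"] words_sum[of "{}"] by simp
  then show ?case by (simp add: fun_eq_iff)
next
  case (insert k K)
  then show ?case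
    using linear_code_add[of "w k" "\<lambda>i. \<Sum>k\<in>K. w k i"] words_sum[of K w n] by simp
qed

lemma dual_vector_of_non_redundant:
  assumes agree: "\<forall>x\<in>words n. \<forall>y\<in>words n. (\<forall>a\<in>R. E x a = E y a) \<longrightarrow> \<Psi> x y"
    and xy: "x \<in> words n" "y \<in> words n" "\<forall>a\<in>R - {c}. E x a = E y a" "\<not> \<Psi> x y"
  shows "\<forall>a\<in>R. E (\<lambda>j. x j + y j) a = (if a = c then 1 else 0)"
proof
  fix a assume "a \<in> R"
  have "c \<in> R \<and> E x c \<noteq> E y c"
    using agree xy by (metis Diff_empty Diff_insert0 insert_Diff insert_iff)
  with \<open>a \<in> R\<close> xy(3) show "E (\<lambda>j. x j + y j) a = (if a = c then 1 else 0)"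
    by (auto simp: linear_code_add[OF xy(1,2)] bit_add_eq_0_iff bit_add_eq_1_iff)
qed

lemma dual_expansion:
  assumes "finite A" "dual_family n E A z" "x \<in> words n"
  shows "(\<lambda>i. \<Sum>b | b \<in> A \<and> E x b = 1. z b i) \<in> words n"
    and "\<forall>a\<in>A. E (\<lambda>i. \<Sum>b | b \<in> A \<and> E x b = 1. z b i) a = E x a"
proof -
  let ?S = "{b. b \<in> A \<and> E x b = 1}"
  have z: "\<forall>b\<in>?S. z b \<in> words n" using assms(2) by (auto simp: dual_family_def)
  then show "(\<lambda>i. \<Sum>b\<in>?S. z b i) \<in> words n" by (rule words_sum)
  show "\<forall>a\<in>A. E (\<lambda>i. \<Sum>b\<in>?S. z b i) a = E x a"
  proof
    fix a assume a: "a \<in> A"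
    have "E (\<lambda>i. \<Sum>b\<in>?S. z b i) a = (\<Sum>b\<in>?S. if a = b then 1 else 0)"
      using linear_code_sum[OF _ z] assms(1,2) a by (auto simp: dual_family_def intro: sum.cong)
    also have "\<dots> = E x a"
      using assms(1) a by (cases "E x a") auto
    finally show "E (\<lambda>i. \<Sum>b\<in>?S. z b i) a = E x a" .
  qed
qed

lemma recovers_imp_sum:
  assumes "finite R" "recovers n E R i"
  obtains F where "F \<subseteq> R" "\<forall>x\<in>words n. x i = (\<Sum>c\<in>F. E x c)"
proof -
  obtain F where F: "F \<subseteq> R" "recovers n E F i" "\<forall>c\<in>F. \<not> recovers n E (F - {c}) i"
    using finite_minimal_subset[of R "\<lambda>F. recovers n E F i"] assms by blast
  have "\<forall>c\<in>F. \<exists>w. w \<in> words n \<and> w i = 1 \<and> (\<forall>a\<in>F. E w a = (if a = c then 1 else 0))"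
  proof
    fix c assume "c \<in> F"
    then obtain x y where xy: "x \<in> words n" "y \<in> words n" "\<forall>a\<in>F - {c}. E x a = E y a" "x i \<noteq> y i"
      using F(3) unfolding recovers_def by blast
    then show "\<exists>w. w \<in> words n \<and> w i = 1 \<and> (\<forall>a\<in>F. E w a = (if a = c then 1 else 0))"
      using dual_vector_of_non_redundant[of F "\<lambda>x y. x i = y i", OF F(2)[unfolded recovers_def]]
      by (intro exI[of _ "\<lambda>j. x j + y j"]) (simp add: words_add bit_add_eq_1_iff)
  qed
  from bchoice[OF this] obtain w
    where w: "\<forall>c\<in>F. w c \<in> words n \<and> w c i = 1 \<and> (\<forall>a\<in>F. E (w c) a = (if a = c then 1 else 0))"
    by blast
  have finF: "finite F" using F(1) assms(1) by (rule finite_subset)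
  have dual: "dual_family n E F w" using w by (simp add: dual_family_def)
  show thesis
  proof (rule that[OF F(1)], intro ballI)
    fix x assume x: "x \<in> words n"
    have "x i = (\<Sum>c | c \<in> F \<and> E x c = 1. w c i)"
      by (rule F(2)[unfolded recovers_def, rule_format, OF x dual_expansion(1)[OF finF dual x]])
        (simp add: dual_expansion(2)[OF finF dual x])
    also have "\<dots> = (\<Sum>c | c \<in> F \<and> E x c = 1. 1)"
      using w by (intro sum.cong) auto
    also have "\<dots> = (\<Sum>c\<in>F. if E x c = 1 then 1 else 0)"
      by (rule sum.inter_filter[OF finF])
    also have "\<dots> = (\<Sum>c\<in>F. E x c)"
      by (intro sum.cong) simp_all
    finally show "x i = (\<Sum>c\<in>F. E x c)" .
  qed
qed

lemma determining_dual_basis: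
  obtains A z where "A \<subseteq> {..<N}" "determines n E A" "dual_family n E A z"
proof -
  have "determines n E {..<N}"
    unfolding determines_def
  proof (intro ballI impI)
    fix x y assume xy: "x \<in> words n" "y \<in> words n" "\<forall>a\<in>{..<N}. E x a = E y a"
    have "E x c = E y c" for c
      using linear xy unfolding linear_code_def words_def by (cases "c < N") auto
    then have "E x = E y" by blast
    then show "x = y" using linear xy unfolding linear_code_def inj_on_def by blast
  qed
  then obtain A where A: "A \<subseteq> {..<N}" "determines n E A" "\<forall>c\<in>A. \<not> determines n E (A - {c})"
    using finite_minimal_subset[of "{..<N}" "determines n E"] by blast
  have "\<forall>c\<in>A. \<exists>w. w \<in> words n \<and> (\<forall>a\<in>A. E w a = (if a = c then 1 else 0))"
  proof
    fix c assume "c \<in> A"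
    then obtain x y where "x \<in> words n" "y \<in> words n" "\<forall>a\<in>A - {c}. E x a = E y a" "x \<noteq> y"
      using A(3) unfolding determines_def by blast
    then show "\<exists>w. w \<in> words n \<and> (\<forall>a\<in>A. E w a = (if a = c then 1 else 0))"
      using dual_vector_of_non_redundant[of A "(=)", OF A(2)[unfolded determines_def]] words_add
      by (intro exI[of _ "\<lambda>j. x j + y j"]) simp
  qed
  from bchoice[OF this] obtain z where "dual_family n E A z"
    unfolding dual_family_def by blast
  with A show thesis using that by blast
qed

end

section \<open>Three disjoint recovery sets force quadratic redundancy\<close>

definition quadratic_form :: "'a set \<Rightarrow> ('a \<times> 'a \<Rightarrow> bit) \<Rightarrow> ('a \<Rightarrow> bit) \<Rightarrow> bit" where
  "quadratic_form T c v = (\<Sum>(t, t')\<in>T \<times> T. c (t, t') * v t * v t')"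

lemma quadratic_form_sum:
  "quadratic_form T (\<lambda>u. \<Sum>k\<in>K. c k u) v = (\<Sum>k\<in>K. quadratic_form T (c k) v)"
  unfolding quadratic_form_def by (simp add: sum_distrib_right split_def) (rule sum.swap)

lemma quadratic_form_add:
  "quadratic_form T (\<lambda>u. c u + d u) v = quadratic_form T c v + quadratic_form T d v"
  unfolding quadratic_form_def by (simp add: distrib_right sum.distrib split_def)

lemma quadratic_form_product:
  assumes "finite T" "B \<subseteq> T" "C \<subseteq> T"
  shows "quadratic_form T (\<lambda>u. if u \<in> B \<times> C then 1 else 0) v = (\<Sum>t\<in>B. v t) * (\<Sum>t\<in>C. v t)"
proof -
  have "quadratic_form T (\<lambda>u. if u \<in> B \<times> C then 1 else 0) v = (\<Sum>(t, t')\<in>B \<times> C. v t * v t')"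
    unfolding quadratic_form_def using assms
    by (intro sum.mono_neutral_cong_right) (auto split: if_splits)
  then show ?thesis
    by (simp add: sum_product sum.cartesian_product)
qed

context
  fixes n N :: nat and E :: "(nat \<Rightarrow> bit) \<Rightarrow> nat \<Rightarrow> bit"
    and A :: "nat set" and z :: "nat \<Rightarrow> nat \<Rightarrow> bit"
  assumes linear: "linear_code n N E"
    and A: "A \<subseteq> {..<N}" and determines: "determines n E A" and dual: "dual_family n E A z"
begin

lemma dual_sums_inj:
  assumes I: "I \<subseteq> {..<n}" and J: "J \<subseteq> {..<n}" and eq: "\<forall>b\<in>A. (\<Sum>i\<in>I. z b i) = (\<Sum>i\<in>J. z b i)"
  shows "I = J"
proof -
  have finA: "finite A" using A finite_subset by blast
  have "i\<^sub>0 \<in> I \<longleftrightarrow> i\<^sub>0 \<in> J" if "i\<^sub>0 < n" for i\<^sub>0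
  proof -
    define x where "x i = (if i = i\<^sub>0 then 1 else 0 :: bit)" for i
    let ?S = "{b. b \<in> A \<and> E x b = 1}"
    have x: "x \<in> words n" using that by (simp add: x_def words_def)
    have expand: "x = (\<lambda>i. \<Sum>b\<in>?S. z b i)"
      using determines x dual_expansion[OF linear finA dual x] unfolding determines_def by metis
    have "(\<Sum>i\<in>K. x i) = (\<Sum>b\<in>?S. \<Sum>i\<in>K. z b i)" for K
      by (subst expand) (rule sum.swap)
    then have "(\<Sum>i\<in>I. x i) = (\<Sum>i\<in>J. x i)"
      using eq by simp
    moreover have "(\<Sum>i\<in>K. x i) = (if i\<^sub>0 \<in> K then 1 else 0)" if "K \<subseteq> {..<n}" for K
      using that finite_subset[OF that] by (simp add: x_def)
    ultimately show ?thesis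
      using I J by (metis one_neq_zero)
  qed
  then show ?thesis using I J by blast
qed

lemma dual_coordinate_split:
  assumes "F \<subseteq> {..<N}" "b \<in> A"
  shows "(\<Sum>c\<in>F. E (z b) c) = (if b \<in> F then 1 else 0) + (\<Sum>c\<in>F \<inter> ({..<N} - A). E (z b) c)"
proof -
  have finF: "finite F" using assms(1) finite_subset by blast
  have "(\<Sum>c\<in>F. E (z b) c) = (\<Sum>c\<in>F \<inter> A. E (z b) c) + (\<Sum>c\<in>F \<inter> ({..<N} - A). E (z b) c)"
    using assms(1) finF by (subst sum.union_disjoint[symmetric]) (auto intro: sum.cong)
  moreover have "(\<Sum>c\<in>F \<inter> A. E (z b) c) = (\<Sum>c\<in>F \<inter> A. if c = b then 1 else 0)"
    using dual assms(2) by (intro sum.cong) (auto simp: dual_family_def)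
  moreover have "(\<Sum>c\<in>F \<inter> A. if c = b then 1 else 0) = (if b \<in> F then 1 else 0 :: bit)"
    using finF assms(2) by (subst sum.delta) auto
  ultimately show ?thesis by simp
qed

lemma dual_entries_quadratic:
  assumes R: "R\<^sub>0 \<union> R\<^sub>1 \<union> R\<^sub>2 \<subseteq> {..<N}" "R\<^sub>0 \<inter> R\<^sub>1 = {}" "R\<^sub>0 \<inter> R\<^sub>2 = {}" "R\<^sub>1 \<inter> R\<^sub>2 = {}"
    and rec: "recovers n E R\<^sub>0 i" "recovers n E R\<^sub>1 i" "recovers n E R\<^sub>2 i"
  obtains c where "c \<in> supported_on (({..<N} - A) \<times> ({..<N} - A))"
    "\<forall>b\<in>A. z b i = quadratic_form ({..<N} - A) c (E (z b))"
proof -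
  let ?T = "{..<N} - A"
  have fin: "finite R\<^sub>0" "finite R\<^sub>1" "finite R\<^sub>2" using R(1) finite_subset by blast+
  obtain F\<^sub>0 where F\<^sub>0: "F\<^sub>0 \<subseteq> R\<^sub>0" "\<forall>x\<in>words n. x i = (\<Sum>c\<in>F\<^sub>0. E x c)"
    using recovers_imp_sum[OF linear fin(1) rec(1)] .
  obtain F\<^sub>1 where F\<^sub>1: "F\<^sub>1 \<subseteq> R\<^sub>1" "\<forall>x\<in>words n. x i = (\<Sum>c\<in>F\<^sub>1. E x c)"
    using recovers_imp_sum[OF linear fin(2) rec(2)] .
  obtain F\<^sub>2 where F\<^sub>2: "F\<^sub>2 \<subseteq> R\<^sub>2" "\<forall>x\<in>words n. x i = (\<Sum>c\<in>F\<^sub>2. E x c)"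
    using recovers_imp_sum[OF linear fin(3) rec(3)] .
  define Y where "Y F b = (\<Sum>c\<in>F \<inter> ?T. E (z b) c)" for F b
  define ind where "ind F F' u = (if u \<in> (F \<inter> ?T) \<times> (F' \<inter> ?T) then 1 else 0 :: bit)" for F F' u
  define c where "c u = ind F\<^sub>0 F\<^sub>1 u + ind F\<^sub>0 F\<^sub>2 u + ind F\<^sub>1 F\<^sub>2 u" for u
  have product: "Y F b * Y F' b = quadratic_form ?T (ind F F') (E (z b))" for F F' b
    unfolding Y_def ind_def by (rule quadratic_form_product[symmetric]) auto
  show thesis
  proof
    show "c \<in> supported_on (?T \<times> ?T)"
      by (auto simp: supported_on_def c_def ind_def)
    show "\<forall>b\<in>A. z b i = quadratic_form ?T c (E (z b))"
    proof
      fix b assume b: "b \<in> A"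
      have zb: "z b \<in> words n" using dual b by (simp add: dual_family_def)
      have split: "z b i = (if b \<in> F then 1 else 0) + Y F b"
        if "F \<subseteq> {..<N}" "\<forall>x\<in>words n. x i = (\<Sum>c\<in>F. E x c)" for F
        using that zb dual_coordinate_split[OF that(1) b] by (simp add: Y_def)
      have disjoint: "\<not> (b \<in> F\<^sub>0 \<and> b \<in> F\<^sub>1)" "\<not> (b \<in> F\<^sub>0 \<and> b \<in> F\<^sub>2)" "\<not> (b \<in> F\<^sub>1 \<and> b \<in> F\<^sub>2)"
        using R F\<^sub>0(1) F\<^sub>1(1) F\<^sub>2(1) by auto
      have bounded: "F\<^sub>0 \<subseteq> {..<N}" "F\<^sub>1 \<subseteq> {..<N}" "F\<^sub>2 \<subseteq> {..<N}"
        using R F\<^sub>0(1) F\<^sub>1(1) F\<^sub>2(1) by auto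
      have "z b i = Y F\<^sub>0 b * Y F\<^sub>1 b + Y F\<^sub>0 b * Y F\<^sub>2 b + Y F\<^sub>1 b * Y F\<^sub>2 b"
        by (rule bit_majority[OF disjoint split[OF bounded(1) F\<^sub>0(2)] split[OF bounded(2) F\<^sub>1(2)]
              split[OF bounded(3) F\<^sub>2(2)]])
      moreover have "quadratic_form ?T c (E (z b)) = quadratic_form ?T (ind F\<^sub>0 F\<^sub>1) (E (z b))
          + quadratic_form ?T (ind F\<^sub>0 F\<^sub>2) (E (z b)) + quadratic_form ?T (ind F\<^sub>1 F\<^sub>2) (E (z b))"
        unfolding c_def quadratic_form_add ..
      ultimately show "z b i = quadratic_form ?T c (E (z b))"
        by (simp only: product)
    qed
  qed
qed

lemma dim_le_complement_square:
  assumes "\<forall>i<n. \<exists>R\<^sub>0 R\<^sub>1 R\<^sub>2. R\<^sub>0 \<union> R\<^sub>1 \<union> R\<^sub>2 \<subseteq> {..<N} \<and>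
      R\<^sub>0 \<inter> R\<^sub>1 = {} \<and> R\<^sub>0 \<inter> R\<^sub>2 = {} \<and> R\<^sub>1 \<inter> R\<^sub>2 = {} \<and>
      recovers n E R\<^sub>0 i \<and> recovers n E R\<^sub>1 i \<and> recovers n E R\<^sub>2 i"
  shows "n \<le> card ({..<N} - A) ^ 2"
proof -
  let ?T = "{..<N} - A"
  have "\<forall>i\<in>{..<n}. \<exists>c. c \<in> supported_on (?T \<times> ?T) \<and> (\<forall>b\<in>A. z b i = quadratic_form ?T c (E (z b)))"
    using assms dual_entries_quadratic by (metis lessThan_iff)
  from bchoice[OF this] obtain c where c:
    "\<forall>i\<in>{..<n}. c i \<in> supported_on (?T \<times> ?T) \<and> (\<forall>b\<in>A. z b i = quadratic_form ?T (c i) (E (z b)))"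
    by blast
  define g where "g I = (\<lambda>u. \<Sum>i\<in>I. c i u)" for I
  have g: "(\<Sum>i\<in>I. z b i) = quadratic_form ?T (g I) (E (z b))" if "I \<subseteq> {..<n}" "b \<in> A" for I b
    using c that by (auto simp: g_def quadratic_form_sum intro: sum.cong)
  have "inj_on g (Pow {..<n})"
    by (rule inj_onI) (use dual_sums_inj g in auto)
  moreover have "g ` Pow {..<n} \<subseteq> supported_on (?T \<times> ?T)"
    using c unfolding g_def supported_on_def by (auto intro!: sum.neutral)
  ultimately have "card (Pow {..<n}) \<le> card (supported_on (?T \<times> ?T))"
    by (intro card_inj_on_le card_supported_on) auto
  then have "(2::nat) ^ n \<le> 2 ^ (card ?T ^ 2)"
    by (simp add: card_Pow card_supported_on card_cartesian_product power2_eq_square)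
  then show ?thesis by simp
qed

end

lemma batch_code_dim_le_redundancy_square:
  assumes batch: "batch_code n N k E" and "3 \<le> k"
  shows "n \<le> (N - n) ^ 2"
proof -
  have linear: "linear_code n N E" using batch by (simp add: batch_code_def)
  obtain A z where A: "A \<subseteq> {..<N}" "determines n E A" "dual_family n E A z"
    using determining_dual_basis[OF linear] .
  have "\<exists>R\<^sub>0 R\<^sub>1 R\<^sub>2. R\<^sub>0 \<union> R\<^sub>1 \<union> R\<^sub>2 \<subseteq> {..<N} \<and> R\<^sub>0 \<inter> R\<^sub>1 = {} \<and> R\<^sub>0 \<inter> R\<^sub>2 = {} \<and> R\<^sub>1 \<inter> R\<^sub>2 = {} \<and>
      recovers n E R\<^sub>0 i \<and> recovers n E R\<^sub>1 i \<and> recovers n E R\<^sub>2 i" if "i < n" for i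
  proof -
    have "length (replicate k i) = k \<and> set (replicate k i) \<subseteq> {..<n}"
      using \<open>i < n\<close> by auto
    then obtain R where "\<forall>j<k. R j \<subseteq> {..<N}" "\<forall>j<k. \<forall>j'<k. j \<noteq> j' \<longrightarrow> R j \<inter> R j' = {}"
      "\<forall>j<k. recovers n E (R j) (replicate k i ! j)"
      using batch unfolding batch_code_def by blast
    then show ?thesis
      using \<open>3 \<le> k\<close> by (intro exI[of _ "R 0"] exI[of _ "R 1"] exI[of _ "R 2"]) auto
  qed
  then have "n \<le> card ({..<N} - A) ^ 2"
    using dim_le_complement_square[OF linear A] by blast
  moreover have "card ({..<N} - A) \<le> N - n"
    using A card_ge_if_determines[of A n E] finite_subset[OF A(1)] by (simp add: card_Diff_subset)
  ultimately show ?thesis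
    by (meson order_trans power_mono zero_le)
qed

section \<open>Lines of the grid \<open>\<int>\<^sub>p \<times> \<int>\<^sub>p\<close>\<close>

lemma dvd_abs_less_imp_eq_0:
  fixes m x :: int
  assumes "m dvd x" "\<bar>x\<bar> < m"
  shows "x = 0"
proof (rule ccontr)
  assume "x \<noteq> 0"
  then have "\<bar>m\<bar> \<le> \<bar>x\<bar>" using assms(1) by (rule dvd_imp_le_int)
  with assms(2) show False by linarith
qed

locale prime_grid =
  fixes p :: nat
  assumes prime: "prime p"
begin

lemma p_pos: "0 < p"
  using prime prime_gt_0_nat by blast

text \<open>Coordinate \<open>c < p * p\<close> is the point \<open>(c div p, c mod p)\<close>; the line of slope \<open>s\<close> with
  intercept \<open>t\<close> is \<open>D p p s t\<close>, i.e. \<open>j = t + i s (mod p)\<close>.\<close>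
definition intercept :: "nat \<Rightarrow> nat \<Rightarrow> int" where
  "intercept s c = (int (c mod p) - int (c div p) * int s) mod int p"

definition line :: "nat \<Rightarrow> nat \<Rightarrow> nat set" where
  "line s c = {c'. c' < p * p \<and> intercept s c' = intercept s c}"

lemma intercept_bounds: "0 \<le> intercept s c" "intercept s c < int p"
  using p_pos by (simp_all add: intercept_def)

lemma intercept_eq_iff_column:
  assumes "j < p" "t < p"
  shows "intercept s (i * p + j) = int t \<longleftrightarrow> j = (t + i * s) mod p"
proof -
  have "(i * p + j) mod p = j" "(i * p + j) div p = i"
    using assms(1) by simp_all
  then have "intercept s (i * p + j) = int t \<longleftrightarrow> (int j - int i * int s) mod int p = int t mod int p"
    using assms(2) by (simp add: intercept_def)
  also have "\<dots> \<longleftrightarrow> int j mod int p = (int t + int i * int s) mod int p"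
    by (simp only: mod_eq_dvd_iff diff_diff_eq add.commute)
  also have "\<dots> \<longleftrightarrow> int j = int ((t + i * s) mod p)"
    using assms(1) by (simp add: zmod_int)
  also have "\<dots> \<longleftrightarrow> j = (t + i * s) mod p"
    by (rule of_nat_eq_iff)
  finally show ?thesis .
qed

lemma eq_if_intercepts_eq:
  assumes "s \<noteq> s'" "s < p" "s' < p" "c < p * p" "c' < p * p"
    and "intercept s c = intercept s c'" "intercept s' c = intercept s' c'"
  shows "c = c'"
proof -
  define di where "di = int (c div p) - int (c' div p)"
  define dj where "dj = int (c mod p) - int (c' mod p)"
  have "intercept r c = intercept r c' \<longleftrightarrow> int p dvd dj - di * int r" for r
  proof -
    have "dj - di * int r =
        (int (c mod p) - int (c div p) * int r) - (int (c' mod p) - int (c' div p) * int r)"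
      by (simp add: di_def dj_def algebra_simps)
    then show ?thesis
      by (simp only: intercept_def mod_eq_dvd_iff)
  qed
  then have dvd: "int p dvd dj - di * int s" "int p dvd dj - di * int s'"
    using assms(6,7) by blast+
  have "di * (int s' - int s) = (dj - di * int s) - (dj - di * int s')"
    by (simp add: algebra_simps)
  then have "int p dvd di * (int s' - int s)"
    using dvd by (metis dvd_diff)
  moreover have "\<not> int p dvd int s' - int s"
  proof
    assume "int p dvd int s' - int s"
    moreover have "\<bar>int s' - int s\<bar> < int p" using assms(2,3) by linarith
    ultimately have "int s' - int s = 0" by (rule dvd_abs_less_imp_eq_0)
    with assms(1) show False by simp
  qed
  moreover have "prime (int p)"
    using prime by simp
  ultimately have "int p dvd di"
    using prime_dvd_mult_iff by blast
  moreover have "\<bar>di\<bar> < int p"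
    using assms(4,5) less_mult_imp_div_less[of c p p] less_mult_imp_div_less[of c' p p]
    unfolding di_def by linarith
  ultimately have "di = 0"
    by (rule dvd_abs_less_imp_eq_0)
  then have "int p dvd dj"
    using dvd(1) by simp
  moreover have "\<bar>dj\<bar> < int p"
    using p_pos mod_less_divisor[of p c] mod_less_divisor[of p c'] unfolding dj_def by linarith
  ultimately have "dj = 0"
    by (rule dvd_abs_less_imp_eq_0)
  with \<open>di = 0\<close> have "c div p = c' div p" "c mod p = c' mod p"
    unfolding di_def dj_def by simp_all
  then show "c = c'"
    by (metis div_mult_mod_eq)
qed

text \<open>Pigeonhole: the intercept pair is injective on the \<open>p * p\<close> points, hence onto.\<close>
lemma lines_meet:
  assumes "s \<noteq> s'" "s < p" "s' < p"
  obtains c where "c < p * p" "intercept s c = intercept s P" "intercept s' c = intercept s' Q"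
proof -
  let ?f = "\<lambda>c. (intercept s c, intercept s' c)"
  have "inj_on ?f {..<p * p}"
    using eq_if_intercepts_eq[OF assms] by (auto intro: inj_onI)
  then have "card (?f ` {..<p * p}) = card ({0..<int p} \<times> {0..<int p})"
    by (simp add: card_image card_cartesian_product)
  moreover have "?f ` {..<p * p} \<subseteq> {0..<int p} \<times> {0..<int p}"
    using intercept_bounds by auto
  ultimately have "?f ` {..<p * p} = {0..<int p} \<times> {0..<int p}"
    by (intro card_subset_eq) auto
  moreover have "(intercept s P, intercept s' Q) \<in> {0..<int p} \<times> {0..<int p}"
    using intercept_bounds by auto
  ultimately have "(intercept s P, intercept s' Q) \<in> ?f ` {..<p * p}"
    by (simp only:)
  then obtain c where "(intercept s P, intercept s' Q) = ?f c" "c \<in> {..<p * p}"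
    by (rule imageE)
  then show thesis
    using that by simp
qed

end

section \<open>The array code with slopes 0 to 4\<close>

lemma grid_index_less: "i < p \<Longrightarrow> j < p \<Longrightarrow> i * p + j < p * (p::nat)"
proof -
  assume "i < p" "j < p"
  then have "i * p + j < (i + 1) * p" by simp
  also have "\<dots> \<le> p * p" using \<open>i < p\<close> by (intro mult_le_mono1) simp
  finally show ?thesis .
qed

lemma grid_index_eq_iff:
  assumes "j < p" "j' < (p::nat)"
  shows "i * p + j = i' * p + j' \<longleftrightarrow> i = i' \<and> j = j'"
proof
  assume "i * p + j = i' * p + j'"
  moreover have "(i * p + j) div p = i" "(i * p + j) mod p = j"
    "(i' * p + j') div p = i'" "(i' * p + j') mod p = j'"
    using assms by simp_all
  ultimately show "i = i' \<and> j = j'" by metis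
qed simp

lemma nth_slopes: "s < 5 \<Longrightarrow> [0, 1, 2, 3, 4] ! s = (s::nat)"
  by (auto simp: less_Suc_eq numeral_eq_Suc)

locale five_slope_code = prime_grid +
  assumes five_le_p: "5 \<le> p"
begin

definition enc :: "(nat \<Rightarrow> bit) \<Rightarrow> nat \<Rightarrow> bit" where
  "enc = array_code_parity p p [0, 1, 2, 3, 4]"

definition parity_index :: "nat \<Rightarrow> nat \<Rightarrow> nat" where
  "parity_index s c = p * p + s * p + nat (intercept s c)"

definition recovery_set :: "nat \<Rightarrow> nat \<Rightarrow> nat set" where
  "recovery_set s c = insert (parity_index s c) (line s c - {c})"

lemma nat_intercept_less: "nat (intercept s c) < p"
  using intercept_bounds[of s c] by linarith

lemma parity_index_div_mod:
  "(parity_index s c - p * p) div p = s" "(parity_index s c - p * p) mod p = nat (intercept s c)"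
  using nat_intercept_less[of s c] by (simp_all add: parity_index_def)

lemma parity_index_bounds:
  assumes "s < 5"
  shows "p * p \<le> parity_index s c" "parity_index s c < p * p + 5 * p"
proof -
  have "s * p + nat (intercept s c) < (s + 1) * p"
    using nat_intercept_less[of s c] by simp
  also have "\<dots> \<le> 5 * p"
    using assms by (intro mult_le_mono1) simp
  finally show "p * p \<le> parity_index s c" "parity_index s c < p * p + 5 * p"
    by (simp_all add: parity_index_def)
qed

lemma parity_index_eq_iff:
  "parity_index s c = parity_index s' c' \<longleftrightarrow> s = s' \<and> intercept s c = intercept s' c'"
proof
  assume eq: "parity_index s c = parity_index s' c'"
  then have "s = s'" "nat (intercept s c) = nat (intercept s' c')"
    using parity_index_div_mod by metis+
  then show "s = s' \<and> intercept s c = intercept s' c'"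
    using intercept_bounds by (simp add: eq_nat_nat_iff)
qed (elim conjE, simp add: parity_index_def)

lemma enc_info: "c < p * p \<Longrightarrow> enc x c = x c"
  by (simp add: enc_def array_code_parity_def array_code_def)

lemma sum_D_eq_sum_line:
  assumes "t < p"
  shows "(\<Sum>(i, j)\<in>D p p s t. x (i * p + j)) = (\<Sum>c | c < p * p \<and> intercept s c = int t. x c)"
proof -
  let ?h = "\<lambda>(i, j). i * p + j"
  have "inj_on ?h (D p p s t)"
    using p_pos grid_index_eq_iff by (auto simp: D_def intro!: inj_onI)
  moreover have "?h ` D p p s t = {c. c < p * p \<and> intercept s c = int t}"
  proof (intro equalityI subsetI)
    fix c assume "c \<in> ?h ` D p p s t"
    then obtain i where "i < p" "c = i * p + (t + i * s) mod p"
      by (auto simp: D_def)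
    then show "c \<in> {c. c < p * p \<and> intercept s c = int t}"
      using assms p_pos grid_index_less intercept_eq_iff_column by simp
  next
    fix c assume c: "c \<in> {c. c < p * p \<and> intercept s c = int t}"
    have "c = (c div p) * p + c mod p" by simp
    moreover have "c div p < p" using c by (simp add: less_mult_imp_div_less)
    moreover have "c mod p = (t + (c div p) * s) mod p"
      using c intercept_eq_iff_column[OF _ assms, of "c mod p" s "c div p"] p_pos by simp
    ultimately show "c \<in> ?h ` D p p s t"
      unfolding D_def by (intro image_eqI[of _ _ "(c div p, c mod p)"]) auto
  qed
  ultimately have "bij_betw ?h (D p p s t) {c. c < p * p \<and> intercept s c = int t}"
    by (simp add: bij_betw_def)
  then show ?thesis
    by (subst sum.reindex_bij_betw[symmetric]) (auto simp: split_def)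
qed

lemma enc_parity_index:
  assumes "s < 5"
  shows "enc x (parity_index s c) = (\<Sum>c'\<in>line s c. x c')"
proof -
  define t where "t = nat (intercept s c)"
  have t: "t < p" "int t = intercept s c"
    using nat_intercept_less intercept_bounds by (simp_all add: t_def)
  have "enc x (parity_index s c) = (\<Sum>(i, j)\<in>D p p ([0, 1, 2, 3, 4] ! s) t. x (i * p + j))"
    using parity_index_bounds[OF assms, of c] parity_index_div_mod[of s c]
    by (simp add: enc_def array_code_parity_def array_code_def Let_def t_def)
  also have "\<dots> = (\<Sum>(i, j)\<in>D p p s t. x (i * p + j))"
    unfolding nth_slopes[OF assms] ..
  also have "\<dots> = (\<Sum>c'\<in>line s c. x c')"
    unfolding sum_D_eq_sum_line[OF t(1)] line_def t(2) ..
  finally show ?thesis .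
qed

lemma linear_code_enc: "linear_code (p * p) (p * p + 5 * p + 1) enc"
  unfolding linear_code_def
proof (intro conjI ballI)
  fix x assume "x \<in> words (p * p)"
  show "enc x \<in> words (p * p + 5 * p + 1)"
    unfolding words_def enc_def array_code_parity_def array_code_def by simp
next
  fix x y assume "x \<in> words (p * p)" "y \<in> words (p * p)"
  show "enc (\<lambda>i. x i + y i) = (\<lambda>c. enc x c + enc y c)"
    unfolding enc_def array_code_parity_def array_code_def
    by (auto simp: Let_def sum.distrib split_def)
next
  show "inj_on enc (words (p * p))"
  proof (rule inj_onI)
    fix x y assume "x \<in> words (p * p)" "y \<in> words (p * p)" "enc x = enc y"
    then have "x c = y c" for c
      using enc_info[of c x] enc_info[of c y] by (cases "c < p * p") (auto simp: words_def)
    then show "x = y" by blast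
  qed
qed

lemma mem_recovery_set:
  "c' \<in> recovery_set s c \<longleftrightarrow>
     c' = parity_index s c \<or> (c' < p * p \<and> intercept s c' = intercept s c \<and> c' \<noteq> c)"
  by (auto simp: recovery_set_def line_def)

lemma mem_recovery_set_grid:
  "c' < p * p \<Longrightarrow> c' \<in> recovery_set s c \<longleftrightarrow> intercept s c' = intercept s c \<and> c' \<noteq> c"
  by (auto simp: mem_recovery_set parity_index_def)

lemma mem_recovery_set_parity:
  "c' \<in> recovery_set s c \<Longrightarrow> \<not> c' < p * p \<Longrightarrow> c' = parity_index s c"
  by (auto simp: mem_recovery_set)

lemma recovery_set_subset: "s < 5 \<Longrightarrow> recovery_set s c \<subseteq> {..<p * p + 5 * p + 1}"
  using parity_index_bounds[of s c] by (auto simp: mem_recovery_set)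

lemma recovery_sets_parallel_disjoint:
  assumes "intercept s c \<noteq> intercept s c'"
  shows "recovery_set s c \<inter> recovery_set s c' = {}"
proof -
  have False if "x \<in> recovery_set s c" "x \<in> recovery_set s c'" for x
  proof (cases "x < p * p")
    case True
    then show False using that assms by (simp add: mem_recovery_set_grid)
  next
    case False
    then show False
      using that assms mem_recovery_set_parity parity_index_eq_iff by metis
  qed
  then show ?thesis by blast
qed

text \<open>Lines of distinct slopes share exactly one point of the grid.\<close>
lemma recovery_sets_meet:
  assumes "s \<noteq> s'" "s < 5" "s' < 5" "U < p * p"
    and "intercept s U = intercept s c" "intercept s' U = intercept s' c'"
  shows "recovery_set s c \<inter> recovery_set s' c' \<subseteq> {U}"
proof
  fix x assume x: "x \<in> recovery_set s c \<inter> recovery_set s' c'"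
  have "x < p * p"
    using x assms(1) mem_recovery_set_parity parity_index_eq_iff by (metis IntE)
  then have "intercept s x = intercept s U" "intercept s' x = intercept s' U"
    using x assms(5,6) by (simp_all add: mem_recovery_set_grid)
  then show "x \<in> {U}"
    using eq_if_intercepts_eq[OF assms(1) _ _ \<open>x < p * p\<close> assms(4)] assms(2,3) five_le_p by simp
qed

lemma recovery_sets_through_disjoint:
  assumes "s \<noteq> s'" "s < 5" "s' < 5" "c' < p * p" "intercept s c' = intercept s c"
  shows "recovery_set s c \<inter> recovery_set s' c' = {}"
  using recovery_sets_meet[OF assms(1-4,5) refl] mem_recovery_set_grid[OF assms(4)] by blast

lemma recovers_singleton: "c < p * p \<Longrightarrow> recovers (p * p) enc {c} c"
  unfolding recovers_def using enc_info by simp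

text \<open>Parity of a line minus the other points of the line; some of those points \<open>K\<close> may
  in turn be recovered from elsewhere in \<open>R\<close>.\<close>
lemma recovers_via_line:
  assumes P: "P < p * p" and s: "s < 5" and K: "K \<subseteq> line s P - {P}"
    and R: "recovery_set s P - K \<subseteq> R" and rec: "\<forall>k\<in>K. recovers (p * p) enc R k"
  shows "recovers (p * p) enc R P"
  unfolding recovers_def
proof (intro ballI impI)
  fix x y assume x: "x \<in> words (p * p)" and y: "y \<in> words (p * p)"
    and agree: "\<forall>c\<in>R. enc x c = enc y c"
  let ?L = "line s P - {P} - K"
  have fin: "finite (line s P)" by (simp add: line_def)
  have decompose: "w P = (\<Sum>c\<in>recovery_set s P - K. enc w c) + (\<Sum>k\<in>K. w k)" for w
  proof -
    have "parity_index s P \<notin> line s P"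
      using parity_index_bounds[OF s, of P] by (auto simp: line_def)
    then have "recovery_set s P - K = insert (parity_index s P) ?L"
      using K by (auto simp: recovery_set_def)
    then have "(\<Sum>c\<in>recovery_set s P - K. enc w c) = enc w (parity_index s P) + (\<Sum>c\<in>?L. enc w c)"
      using \<open>parity_index s P \<notin> line s P\<close> fin by simp
    also have "(\<Sum>c\<in>?L. enc w c) = (\<Sum>c\<in>?L. w c)"
      by (intro sum.cong refl enc_info) (simp add: line_def)
    also have "enc w (parity_index s P) = (\<Sum>c\<in>line s P. w c)"
      by (rule enc_parity_index[OF s])
    also have "(\<Sum>c\<in>line s P. w c) = w P + (\<Sum>c\<in>line s P - {P}. w c)"
      using P by (intro sum.remove[OF fin]) (simp add: line_def)
    also have "(\<Sum>c\<in>line s P - {P}. w c) = (\<Sum>c\<in>?L. w c) + (\<Sum>k\<in>K. w k)"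
      using K fin by (intro sum.subset_diff) auto
    finally show ?thesis by (simp add: add.assoc)
  qed
  have "(\<Sum>c\<in>recovery_set s P - K. enc x c) = (\<Sum>c\<in>recovery_set s P - K. enc y c)"
    using R agree by (intro sum.cong) auto
  moreover have "(\<Sum>k\<in>K. x k) = (\<Sum>k\<in>K. y k)"
    using rec x y agree by (intro sum.cong) (auto simp: recovers_def)
  ultimately show "x P = y P"
    by (simp only: decompose[of x] decompose[of y])
qed

lemma recovers_recovery_set: "P < p * p \<Longrightarrow> s < 5 \<Longrightarrow> recovers (p * p) enc (recovery_set s P) P"
  by (rule recovers_via_line[of P s "{}"]) auto

end

section \<open>Serving requests of five bits\<close>

definition request_slots :: "'a list \<Rightarrow> ('a \<times> nat) set" where
  "request_slots xs = {(Q, k). Q \<in> set xs \<and> k < count_list xs Q}"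

definition recovery_plan ::
  "nat \<Rightarrow> nat \<Rightarrow> ((nat \<Rightarrow> bit) \<Rightarrow> nat \<Rightarrow> bit) \<Rightarrow> nat list \<Rightarrow> (nat \<times> nat \<Rightarrow> nat set) \<Rightarrow> bool" where
  "recovery_plan n N E xs f \<longleftrightarrow> disjoint_family_on f (request_slots xs) \<and>
     (\<forall>(Q, k)\<in>request_slots xs. f (Q, k) \<subseteq> {..<N} \<and> recovers n E (f (Q, k)) Q)"

lemma slot_bounds: "(Q, k) \<in> request_slots xs \<Longrightarrow> Q \<in> set xs \<and> k < count_list xs Q"
  by (simp add: request_slots_def)

lemma recovery_planI:
  assumes "\<And>Q k Q' k'. (Q, k) \<in> request_slots xs \<Longrightarrow> (Q', k') \<in> request_slots xs \<Longrightarrow>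
      (Q, k) \<noteq> (Q', k') \<Longrightarrow> f (Q, k) \<inter> f (Q', k') = {}"
    and "\<And>Q k. (Q, k) \<in> request_slots xs \<Longrightarrow> f (Q, k) \<subseteq> {..<N} \<and> recovers n E (f (Q, k)) Q"
  shows "recovery_plan n N E xs f"
proof -
  have "disjoint_family_on f (request_slots xs)"
    unfolding disjoint_family_on_def using assms(1) by (metis surj_pair)
  then show ?thesis
    unfolding recovery_plan_def using assms(2) by auto
qed

lemma count_list_take_less:
  assumes "j < length xs"
  shows "count_list (take j xs) (xs ! j) < count_list xs (xs ! j)"
proof -
  let ?a = "xs ! j"
  have "take j xs @ ?a # drop (Suc j) xs = xs"
    using id_take_nth_drop[OF assms] by simp
  moreover have "count_list (take j xs @ ?a # drop (Suc j) xs) ?a =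
      count_list (take j xs) ?a + Suc (count_list (drop (Suc j) xs) ?a)"
    by simp
  ultimately show ?thesis by simp
qed

lemma count_list_take_strict_mono:
  assumes "j < j'" "j' < length xs" "xs ! j = xs ! j'"
  shows "count_list (take j xs) (xs ! j) < count_list (take j' xs) (xs ! j')"
proof -
  have "take j' xs = take j xs @ xs ! j # take (j' - Suc j) (drop (Suc j) xs)"
    using assms(1,2) take_add[of "Suc j" "j' - Suc j" xs] take_Suc_conv_app_nth[of j xs] by simp
  then show ?thesis
    using assms(3) by simp
qed

lemma batch_sets_of_recovery_plan:
  assumes "recovery_plan n N E xs f"
  shows "\<exists>R. (\<forall>j<length xs. R j \<subseteq> {..<N}) \<and>
    (\<forall>j<length xs. \<forall>j'<length xs. j \<noteq> j' \<longrightarrow> R j \<inter> R j' = {}) \<and>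
    (\<forall>j<length xs. recovers n E (R j) (xs ! j))"
proof -
  define slot where "slot j = (xs ! j, count_list (take j xs) (xs ! j))" for j
  have slot: "slot j \<in> request_slots xs" if "j < length xs" for j
    using that count_list_take_less by (simp add: slot_def request_slots_def)
  have slot_inj: "slot j \<noteq> slot j'" if j: "j < length xs" "j' < length xs" "j \<noteq> j'" for j j'
  proof
    assume "slot j = slot j'"
    then have eq: "xs ! j = xs ! j'" "count_list (take j xs) (xs ! j) = count_list (take j' xs) (xs ! j')"
      by (auto simp: slot_def)
    from j(3) consider "j < j'" | "j' < j" by linarith
    then show False
    proof cases
      case 1
      then show False using eq j count_list_take_strict_mono[of j j' xs] by simp
    next
      case 2
      then show False using eq j count_list_take_strict_mono[of j' j xs] by simp
    qed
  qed
  have f: "f u \<subseteq> {..<N}" "recovers n E (f u) (fst u)" if "u \<in> request_slots xs" for u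
    using assms that unfolding recovery_plan_def by auto
  have "f (slot j) \<inter> f (slot j') = {}" if "j < length xs" "j' < length xs" "j \<noteq> j'" for j j'
    using assms slot slot_inj that unfolding recovery_plan_def disjoint_family_on_def by blast
  moreover have "fst (slot j) = xs ! j" for j
    by (simp add: slot_def)
  ultimately show ?thesis
    using f slot by (intro exI[of _ "\<lambda>j. f (slot j)"]) metis
qed

lemma count_list_add_card_others: "count_list xs P + card (set xs - {P}) \<le> length xs"
proof (cases "P \<in> set xs")
  case True
  have "card (set xs - {P}) = (\<Sum>Q\<in>set xs - {P}. 1)" by simp
  also have "\<dots> \<le> (\<Sum>Q\<in>set xs - {P}. count_list xs Q)"
  proof (rule sum_mono)
    fix Q assume "Q \<in> set xs - {P}"
    then have "count_list xs Q \<noteq> 0" by (simp add: count_list_0_iff)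
    then show "1 \<le> count_list xs Q" by simp
  qed
  finally have "count_list xs P + card (set xs - {P}) \<le> (\<Sum>Q\<in>set xs. count_list xs Q)"
    using True by (simp add: sum.remove)
  then show ?thesis by (simp add: sum_count_set)
next
  case False
  then show ?thesis by (simp add: card_length)
qed

context five_slope_code
begin

lemma card_common_slopes_le_1:
  assumes "X < p * p" "Y < p * p" "X \<noteq> Y"
  shows "card {s. s < 5 \<and> intercept s X = intercept s Y} \<le> 1"
proof -
  have "s = s'"
    if "s < 5" "s' < 5" "intercept s X = intercept s Y" "intercept s' X = intercept s' Y" for s s'
    using eq_if_intercepts_eq[of s s' X Y] that assms five_le_p by linarith
  then show ?thesis by (auto simp: card_le_Suc0_iff_eq)
qed

lemma separating_slopes:
  assumes "finite Pairs" "S \<subseteq> {..<p * p}" "\<forall>(X, Y)\<in>Pairs. X \<in> S \<and> Y \<in> S \<and> X \<noteq> Y"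
    and "card Pairs + m \<le> 5"
  obtains g where "inj_on g {..<m}"
    "\<forall>k<m. g k < 5 \<and> (\<forall>(X, Y)\<in>Pairs. intercept (g k) X \<noteq> intercept (g k) Y)"
proof -
  define bad where "bad = (\<Union>(X, Y)\<in>Pairs. {s. s < 5 \<and> intercept s X = intercept s Y})"
  have "card bad \<le> (\<Sum>(X, Y)\<in>Pairs. card {s. s < 5 \<and> intercept s X = intercept s Y})"
    unfolding bad_def split_def by (rule card_UN_le[OF assms(1)])
  also have "\<dots> \<le> (\<Sum>(X, Y)\<in>Pairs. 1)"
  proof (intro sum_mono, clarify)
    fix X Y assume "(X, Y) \<in> Pairs"
    then have "X \<in> S" "Y \<in> S" "X \<noteq> Y" using assms(3) by auto
    then show "card {s. s < 5 \<and> intercept s X = intercept s Y} \<le> 1"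
      using assms(2) card_common_slopes_le_1 by blast
  qed
  finally have "card bad \<le> card Pairs" by simp
  moreover have "finite bad"
    unfolding bad_def by (rule finite_UN_I[OF assms(1)]) (simp add: split_def)
  then have "5 - card bad \<le> card ({..<5} - bad)"
    using diff_card_le_card_Diff[of bad "{..<5}"] by simp
  ultimately have "m \<le> card ({..<5} - bad)"
    using assms(4) by linarith
  then obtain g where "g ` {..<m} \<subseteq> {..<5} - bad" "inj_on g {..<m}"
    using card_le_inj[of "{..<m}" "{..<5} - bad"] by auto
  then show thesis
    by (intro that) (auto simp: bad_def)
qed

lemma slopes_avoiding_others:
  assumes pts: "set xs \<subseteq> {..<p * p}" and len: "length xs = 5" and P: "P \<in> set xs"
  obtains g where "inj_on g {..<count_list xs P}" "\<forall>k<count_list xs P. g k < 5"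
    "\<forall>k<count_list xs P. \<forall>Q\<in>set xs. Q \<notin> recovery_set (g k) P"
proof -
  let ?O = "set xs - {P}" and ?m = "count_list xs P"
  have "card ((\<lambda>Q. (Q, P)) ` ?O) + ?m \<le> 5"
    using count_list_add_card_others[of xs P] card_image_le[of ?O "\<lambda>Q. (Q, P)"] len by simp
  moreover have "\<forall>(X, Y)\<in>(\<lambda>Q. (Q, P)) ` ?O. X \<in> set xs \<and> Y \<in> set xs \<and> X \<noteq> Y"
    using P by auto
  ultimately obtain g where g: "inj_on g {..<?m}"
    "\<forall>k<?m. g k < 5 \<and> (\<forall>(X, Y)\<in>(\<lambda>Q. (Q, P)) ` ?O. intercept (g k) X \<noteq> intercept (g k) Y)"
    using separating_slopes[of "(\<lambda>Q. (Q, P)) ` ?O" "set xs" ?m] pts by blast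
  have avoid: "Q \<notin> recovery_set (g k) P" if "k < ?m" "Q \<in> set xs" for k Q
  proof -
    have "Q < p * p" using subsetD[OF pts that(2)] by simp
    moreover have "intercept (g k) Q \<noteq> intercept (g k) P" if "Q \<noteq> P"
      using g(2) \<open>k < ?m\<close> \<open>Q \<in> set xs\<close> that by auto
    ultimately show ?thesis by (auto simp: mem_recovery_set_grid)
  qed
  show thesis
  proof (rule that)
    show "inj_on g {..<?m}" by (rule g(1))
    show "\<forall>k<?m. g k < 5" using g(2) by blast
    show "\<forall>k<?m. \<forall>Q\<in>set xs. Q \<notin> recovery_set (g k) P" using avoid by blast
  qed
qed

lemma recovery_plan_one_repeated:
  assumes pts: "set xs \<subseteq> {..<p * p}" and len: "length xs = 5" and P: "P \<in> set xs"
    and single: "\<forall>Q\<in>set xs. Q \<noteq> P \<longrightarrow> count_list xs Q \<le> 1"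
  obtains f where "recovery_plan (p * p) (p * p + 5 * p + 1) enc xs f"
proof -
  let ?m = "count_list xs P"
  obtain g where g: "inj_on g {..<?m}" "\<forall>k<?m. g k < 5"
    "\<forall>k<?m. \<forall>Q\<in>set xs. Q \<notin> recovery_set (g k) P"
    using slopes_avoiding_others[OF pts len P] .
  have P_grid: "P < p * p" using pts P by blast
  define f
    where "f = (\<lambda>(Q, k). if Q \<noteq> P then {Q} else if k = 0 then {P} else recovery_set (g (k - 1)) P)"
  have disjoint_P: "f (Q, k) \<inter> f (P, k') = {}"
    if "(Q, k) \<in> request_slots xs" "(P, k') \<in> request_slots xs" "(Q, k) \<noteq> (P, k')" for Q k k'
  proof (cases "Q = P")
    case True
    then have "k \<noteq> k'" "k < ?m" "k' < ?m" using that by (auto simp: request_slots_def)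
    moreover have "g (k - 1) \<noteq> g (k' - 1)" if "k \<noteq> 0" "k' \<noteq> 0"
      using that \<open>k \<noteq> k'\<close> \<open>k < ?m\<close> \<open>k' < ?m\<close> by (intro inj_on_contraD[OF g(1)]) auto
    ultimately show ?thesis
      using True P g(2,3) P_grid recovery_sets_through_disjoint by (auto simp: f_def)
  next
    case False
    then have "k = 0" "Q \<in> set xs" "k' < ?m"
      using that single by (auto simp: request_slots_def)
    then show ?thesis
      using False g(3) by (auto simp: f_def)
  qed
  show thesis
  proof (rule that, rule recovery_planI)
    fix Q k Q' k' assume slots: "(Q, k) \<in> request_slots xs" "(Q', k') \<in> request_slots xs"
      and ne: "(Q, k) \<noteq> (Q', k')"
    show "f (Q, k) \<inter> f (Q', k') = {}"
    proof (cases "Q' = P")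
      case True
      then show ?thesis using disjoint_P slots ne by blast
    next
      case False
      show ?thesis
      proof (cases "Q = P")
        case True
        then have "f (Q', k') \<inter> f (Q, k) = {}" using disjoint_P[of Q' k' k] slots ne by auto
        then show ?thesis by (simp add: Int_commute)
      next
        case False
        then have "k = 0" "k' = 0" using \<open>Q' \<noteq> P\<close> slots single by (auto simp: request_slots_def)
        then show ?thesis using False \<open>Q' \<noteq> P\<close> ne by (simp add: f_def)
      qed
    qed
  next
    fix Q k assume slot: "(Q, k) \<in> request_slots xs"
    show "f (Q, k) \<subseteq> {..<p * p + 5 * p + 1} \<and> recovers (p * p) enc (f (Q, k)) Q"
    proof (cases "Q \<noteq> P \<or> k = 0")
      case True
      moreover have "Q < p * p" using slot pts by (auto simp: request_slots_def)
      ultimately show ?thesis by (auto simp: f_def recovers_singleton)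
    next
      case False
      then have "g (k - 1) < 5" using slot g(2) by (auto simp: request_slots_def)
      then show ?thesis
        using False P_grid recovery_set_subset recovers_recovery_set by (simp add: f_def)
    qed
  qed
qed

lemma recovery_plan_three_points:
  assumes pts: "set xs \<subseteq> {..<p * p}" and PQR: "P \<in> set xs" "Q \<in> set xs" "R \<in> set xs"
    and sub: "set xs \<subseteq> {P, Q, R}" and twice: "\<forall>X. count_list xs X \<le> 2"
  obtains f where "recovery_plan (p * p) (p * p + 5 * p + 1) enc xs f"
proof -
  let ?Pairs = "{(P, Q), (P, R), (Q, R)} - {(X, Y). X = Y}"
  have "card ?Pairs \<le> card {(P, Q), (P, R), (Q, R)}"
    by (rule card_mono) auto
  also have "\<dots> \<le> 3"
    using card_length[of "[(P, Q), (P, R), (Q, R)]"] by simp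
  finally have card: "card ?Pairs + 1 \<le> 5" by simp
  have pairs: "\<forall>(X, Y)\<in>?Pairs. X \<in> set xs \<and> Y \<in> set xs \<and> X \<noteq> Y"
    using PQR by auto
  obtain g :: "nat \<Rightarrow> nat" where "inj_on g {..<1}"
    "\<forall>k<1. g k < 5 \<and> (\<forall>(X, Y)\<in>?Pairs. intercept (g k) X \<noteq> intercept (g k) Y)"
    by (rule separating_slopes[OF _ pts pairs card]) simp
  then obtain a where a: "a < 5" and a_sep: "\<forall>(X, Y)\<in>?Pairs. intercept a X \<noteq> intercept a Y"
    by blast
  have separated: "intercept a X \<noteq> intercept a Y" if "X \<in> set xs" "Y \<in> set xs" "X \<noteq> Y" for X Y
  proof -
    have pair: "intercept a U \<noteq> intercept a V" if "(U, V) \<in> ?Pairs" for U V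
      using bspec[OF a_sep that] by simp
    have "(X, Y) \<in> ?Pairs \<or> (Y, X) \<in> ?Pairs"
      using that sub by auto
    then show ?thesis
      using pair by (metis (no_types))
  qed
  have notin: "X \<notin> recovery_set a Y" if XY: "X \<in> set xs" "Y \<in> set xs" for X Y
  proof
    assume "X \<in> recovery_set a Y"
    moreover have "X < p * p" using XY(1) pts by auto
    ultimately have "intercept a X = intercept a Y" "X \<noteq> Y"
      by (simp_all add: mem_recovery_set_grid)
    with separated[OF XY] show False by simp
  qed
  define f where "f = (\<lambda>(X, k :: nat). if k = 0 then {X} else recovery_set a X)"
  show thesis
  proof (rule that, rule recovery_planI)
    fix X k Y k' assume slots: "(X, k) \<in> request_slots xs" "(Y, k') \<in> request_slots xs"
      and ne: "(X, k) \<noteq> (Y, k')"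
    have XY: "X \<in> set xs" "Y \<in> set xs" "k < 2" "k' < 2"
      using slot_bounds[OF slots(1)] slot_bounds[OF slots(2)] twice[rule_format, of X]
        twice[rule_format, of Y] by linarith+
    consider "k = 0" "k' = 0" | "k = 0" "k' = 1" | "k = 1" "k' = 0" | "k = 1" "k' = 1"
      using XY by linarith
    then show "f (X, k) \<inter> f (Y, k') = {}"
    proof cases
      case 4
      then have "X \<noteq> Y" using ne by simp
      then show ?thesis
        using 4 XY separated recovery_sets_parallel_disjoint by (simp add: f_def)
    qed (use ne XY notin in \<open>auto simp: f_def\<close>)
  next
    fix X k assume "(X, k) \<in> request_slots xs"
    then have "X < p * p" using pts by (auto simp: request_slots_def)
    then show "f (X, k) \<subseteq> {..<p * p + 5 * p + 1} \<and> recovers (p * p) enc (f (X, k)) X"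
      using a recovery_set_subset recovers_recovery_set recovers_singleton by (simp add: f_def)
  qed
qed

lemma not_mem_recovery_set_if_collinear:
  assumes "s \<noteq> s'" "s < 5" "s' < 5" "X < p * p" "U < p * p" "X \<noteq> U"
    and "intercept s' X = intercept s' U"
  shows "X \<notin> recovery_set s U"
proof
  assume "X \<in> recovery_set s U"
  then have "intercept s X = intercept s U"
    using assms(4) by (simp add: mem_recovery_set_grid)
  then have "X = U"
    using eq_if_intercepts_eq[OF assms(1) _ _ assms(4,5)] assms(2,3,7) five_le_p by simp
  with assms(6) show False by simp
qed

text \<open>The slope-\<open>d\<close> recovery set of \<open>Q\<close> in which the points \<open>U\<close> and \<open>V\<close> of that line are
  not read directly but recovered along slopes \<open>b\<close> and \<open>a\<close>.\<close>
definition rerouted_set :: "nat \<Rightarrow> nat \<Rightarrow> nat \<Rightarrow> nat \<Rightarrow> nat \<Rightarrow> nat \<Rightarrow> nat set" where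
  "rerouted_set d Q b U a V = (recovery_set d Q - {U, V}) \<union> recovery_set b U \<union> recovery_set a V"

lemma rerouted_set_swap: "rerouted_set d Q b U a V = rerouted_set d Q a V b U"
  by (auto simp: rerouted_set_def)

lemma rerouted_set_subset:
  "a < 5 \<Longrightarrow> b < 5 \<Longrightarrow> d < 5 \<Longrightarrow> rerouted_set d Q b U a V \<subseteq> {..<p * p + 5 * p + 1}"
  using recovery_set_subset unfolding rerouted_set_def by blast

lemma recovers_rerouted_set:
  assumes "a < 5" "b < 5" "d < 5" "Q < p * p" "U < p * p" "V < p * p" "U \<noteq> Q" "V \<noteq> Q"
    and "intercept d U = intercept d Q" "intercept d V = intercept d Q"
  shows "recovers (p * p) enc (rerouted_set d Q b U a V) Q"
proof (rule recovers_via_line[OF assms(4,3), of "{U, V}"])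
  show "{U, V} \<subseteq> line d Q - {Q}"
    using assms(5-10) by (simp add: line_def)
  show "recovery_set d Q - {U, V} \<subseteq> rerouted_set d Q b U a V"
    unfolding rerouted_set_def by blast
  show "\<forall>k\<in>{U, V}. recovers (p * p) enc (rerouted_set d Q b U a V) k"
    using recovers_mono[OF recovers_recovery_set[OF assms(5,2)], of "rerouted_set d Q b U a V"]
      recovers_mono[OF recovers_recovery_set[OF assms(6,1)], of "rerouted_set d Q b U a V"]
    unfolding rerouted_set_def by blast
qed

lemma recovery_set_disjoint_rerouted_set:
  assumes slopes: "a \<noteq> b" "a \<noteq> d" "a < 5" "b < 5" "d < 5"
    and grid: "P < p * p" "U < p * p" "V < p * p"
    and PQ: "intercept d P \<noteq> intercept d Q"
    and U: "intercept a U = intercept a P" "intercept d U = intercept d Q"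
    and V: "intercept b V = intercept b P" "intercept d V = intercept d Q"
  shows "recovery_set a P \<inter> rerouted_set d Q b U a V = {}"
proof -
  have "recovery_set a P \<inter> recovery_set d Q \<subseteq> {U}"
    by (rule recovery_sets_meet[OF slopes(2,3,5) grid(2) U])
  moreover have "recovery_set a P \<inter> recovery_set b U = {}"
    by (rule recovery_sets_through_disjoint[OF slopes(1,3,4) grid(2) U(1)])
  moreover have "intercept a P \<noteq> intercept a V"
  proof
    assume "intercept a P = intercept a V"
    then have "V = P"
      using eq_if_intercepts_eq[OF slopes(1) _ _ grid(3,1)] slopes(3,4) V(1) five_le_p by simp
    with V(2) PQ show False by simp
  qed
  then have "recovery_set a P \<inter> recovery_set a V = {}"
    by (rule recovery_sets_parallel_disjoint)
  ultimately show ?thesis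
    unfolding rerouted_set_def by blast
qed

lemma recovery_plan_two_points:
  assumes pts: "set xs \<subseteq> {..<p * p}" and PQ: "P \<in> set xs" "Q \<in> set xs" "P \<noteq> Q"
    and sub: "set xs \<subseteq> {P, Q}" and counts: "count_list xs P \<le> 3" "count_list xs Q \<le> 2"
  obtains f where "recovery_plan (p * p) (p * p + 5 * p + 1) enc xs f"
proof -
  have grid: "P < p * p" "Q < p * p" using pts PQ by auto
  obtain g :: "nat \<Rightarrow> nat" where g: "inj_on g {..<3}"
    "\<forall>k<3. g k < 5 \<and> (\<forall>(X, Y)\<in>{(P, Q)}. intercept (g k) X \<noteq> intercept (g k) Y)"
    by (rule separating_slopes[of "{(P, Q)}" "set xs" 3]) (use pts PQ in auto)
  define a b d where "a = g 0" and "b = g 1" and "d = g 2"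
  have slopes: "a \<noteq> b" "a \<noteq> d" "b \<noteq> d"
    unfolding a_def b_def d_def using g(1) by (auto dest: inj_onD)
  have small: "a < 5" "b < 5" "d < 5" and sep: "intercept a P \<noteq> intercept a Q"
    "intercept b P \<noteq> intercept b Q" "intercept d P \<noteq> intercept d Q"
    using g(2) unfolding a_def b_def d_def by auto
  obtain U where U: "U < p * p" "intercept a U = intercept a P" "intercept d U = intercept d Q"
    using lines_meet[of a d P Q] slopes(2) small five_le_p by auto
  obtain V where V: "V < p * p" "intercept b V = intercept b P" "intercept d V = intercept d Q"
    using lines_meet[of b d P Q] slopes(3) small five_le_p by auto
  have UV: "U \<noteq> P" "U \<noteq> Q" "V \<noteq> P" "V \<noteq> Q"
    using U V sep by auto
  define W where "W = rerouted_set d Q b U a V"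
  have P_notin: "P \<notin> recovery_set a P" "P \<notin> recovery_set b P" "P \<notin> W"
    using grid sep(3) UV U V not_mem_recovery_set_if_collinear[of b a P U]
      not_mem_recovery_set_if_collinear[of a b P V] slopes small
    by (auto simp: W_def rerouted_set_def mem_recovery_set_grid)
  have Q_notin: "Q \<notin> recovery_set a P" "Q \<notin> recovery_set b P" "Q \<notin> W"
    using grid sep UV U V not_mem_recovery_set_if_collinear[of b d Q U]
      not_mem_recovery_set_if_collinear[of a d Q V] slopes small
    by (auto simp: W_def rerouted_set_def mem_recovery_set_grid)
  have "recovery_set a P \<inter> W = {}"
    unfolding W_def using slopes small grid U V sep(3)
    by (intro recovery_set_disjoint_rerouted_set) auto
  moreover have "recovery_set b P \<inter> W = {}"
    unfolding W_def rerouted_set_swap[of d Q b U a V] using slopes small grid U V sep(3)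
    by (intro recovery_set_disjoint_rerouted_set) auto
  ultimately have W_disjoint: "recovery_set a P \<inter> W = {}" "recovery_set b P \<inter> W = {}"
    by blast+
  have ab_disjoint: "recovery_set a P \<inter> recovery_set b P = {}"
    by (rule recovery_sets_through_disjoint[OF slopes(1) small(1,2) grid(1) refl])
  define S where "S = [{P}, recovery_set a P, recovery_set b P, {Q}, W]"
  have S_disjoint: "S ! i \<inter> S ! j = {}" if "i < 5" "j < 5" "i \<noteq> j" for i j
  proof -
    have "i \<in> {0, 1, 2, 3, 4}" "j \<in> {0, 1, 2, 3, 4}" using that by auto
    then show ?thesis
      using that P_notin Q_notin W_disjoint ab_disjoint PQ(3) by (auto simp: S_def Int_commute)
  qed
  define idx where "idx = (\<lambda>(X, k :: nat). if X = P then k else 3 + k)"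
  define f where "f u = S ! idx u" for u
  have slot: "X = P \<and> k < 3 \<or> X = Q \<and> k < 2" if "(X, k) \<in> request_slots xs" for X k
    using that sub counts by (auto simp: request_slots_def)
  show thesis
  proof (rule that, rule recovery_planI)
    fix X k Y k' assume slots: "(X, k) \<in> request_slots xs" "(Y, k') \<in> request_slots xs"
      and ne: "(X, k) \<noteq> (Y, k')"
    have "idx (X, k) < 5" "idx (Y, k') < 5" "idx (X, k) \<noteq> idx (Y, k')"
      using slot[OF slots(1)] slot[OF slots(2)] ne PQ(3) by (auto simp: idx_def)
    then show "f (X, k) \<inter> f (Y, k') = {}"
      unfolding f_def by (rule S_disjoint)
  next
    fix X k assume "(X, k) \<in> request_slots xs"
    from slot[OF this] have "X = P \<and> (k = 0 \<or> k = 1 \<or> k = 2) \<or> X = Q \<and> (k = 0 \<or> k = 1)"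
      by arith
    moreover have "f (P, 0) = {P}" "f (P, 1) = recovery_set a P" "f (P, 2) = recovery_set b P"
      "f (Q, 0) = {Q}" "f (Q, 1) = W"
      using PQ(3) by (simp_all add: f_def idx_def S_def)
    moreover have "recovers (p * p) enc W Q"
      unfolding W_def using small grid U V UV by (intro recovers_rerouted_set) auto
    ultimately show "f (X, k) \<subseteq> {..<p * p + 5 * p + 1} \<and> recovers (p * p) enc (f (X, k)) X"
      using grid recovers_singleton rerouted_set_subset[OF small, of Q U V] W_def
        recovery_set_subset[OF small(1), of P] recovery_set_subset[OF small(2), of P]
        recovers_recovery_set[OF grid(1) small(1)] recovers_recovery_set[OF grid(1) small(2)]
      by auto
  qed
qed

end

lemma length_eq_count_list_add_count_list:
  "P \<noteq> Q \<Longrightarrow> length xs = count_list xs P + count_list xs Q + length (filter (\<lambda>x. x \<noteq> P \<and> x \<noteq> Q) xs)"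
  by (induction xs) auto

lemma count_list_filter_others:
  "X \<noteq> P \<Longrightarrow> X \<noteq> Q \<Longrightarrow> count_list xs X = count_list (filter (\<lambda>x. x \<noteq> P \<and> x \<noteq> Q) xs) X"
  by (induction xs) auto

lemma request_of_five_cases:
  assumes "length xs = 5"
  obtains (one_repeated) P where "P \<in> set xs" "\<forall>Q\<in>set xs. Q \<noteq> P \<longrightarrow> count_list xs Q \<le> 1"
  | (three_points) P Q R where "P \<in> set xs" "Q \<in> set xs" "R \<in> set xs" "set xs \<subseteq> {P, Q, R}"
      "\<forall>X. count_list xs X \<le> 2"
  | (two_points) P Q where "P \<in> set xs" "Q \<in> set xs" "P \<noteq> Q" "set xs \<subseteq> {P, Q}"
      "count_list xs P \<le> 3" "count_list xs Q \<le> 2"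
proof (cases "\<exists>P\<in>set xs. \<forall>Q\<in>set xs. Q \<noteq> P \<longrightarrow> count_list xs Q \<le> 1")
  case True
  then show thesis using one_repeated by blast
next
  case False
  have "xs ! 0 \<in> set xs" using assms by simp
  then obtain P where P: "P \<in> set xs" "2 \<le> count_list xs P"
    using False by force
  then obtain Q where Q: "Q \<in> set xs" "Q \<noteq> P" "2 \<le> count_list xs Q"
    using False by force
  let ?rest = "filter (\<lambda>x. x \<noteq> P \<and> x \<noteq> Q) xs"
  have len: "count_list xs P + count_list xs Q + length ?rest = 5"
    using length_eq_count_list_add_count_list[of P Q xs] Q(2) assms by simp
  have others: "x = P \<or> x = Q \<or> x \<in> set ?rest" if "x \<in> set xs" for x
    using that by auto
  have "length ?rest \<le> 1"
    using len P(2) Q(3) by linarith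
  then consider "?rest = []" | R where "?rest = [R]"
    by (cases ?rest) auto
  then show thesis
  proof cases
    case 1
    then have sub: "set xs \<subseteq> {P, Q}" using others by auto
    have counts: "count_list xs P + count_list xs Q = 5"
      using len 1 by simp
    show thesis
    proof (cases "count_list xs Q \<le> 2")
      case True
      then show thesis
        using two_points[OF P(1) Q(1) Q(2)[symmetric] sub] counts Q(3) by simp
    next
      case False
      then show thesis
        using two_points[OF Q(1) P(1) Q(2)] sub counts P(2) by (simp add: insert_commute)
    qed
  next
    case (2 R)
    then have "R \<in> set ?rest" by simp
    then have R: "R \<in> set xs" "R \<noteq> P" "R \<noteq> Q" by simp_all
    have sub: "set xs \<subseteq> {P, Q, R}" using others 2 by auto
    have "count_list xs X \<le> 2" for X
    proof -
      have "count_list xs P + count_list xs Q = 4"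
        using len 2 by simp
      then have "count_list xs P = 2" "count_list xs Q = 2"
        using P(2) Q(3) by linarith+
      moreover have "count_list xs X \<le> 1" if "X \<noteq> P" "X \<noteq> Q"
        using count_list_filter_others[OF that, of xs] 2 by simp
      ultimately show ?thesis
        by (cases "X = P \<or> X = Q") auto
    qed
    then show thesis using three_points[OF P(1) Q(1) R(1) sub] by blast
  qed
qed

context five_slope_code
begin

lemma batch_code_enc: "batch_code (p * p) (p * p + 5 * p + 1) 5 enc"
  unfolding batch_code_def
proof (intro conjI allI impI)
  show "linear_code (p * p) (p * p + 5 * p + 1) enc" by (rule linear_code_enc)
next
  fix xs :: "nat list" assume xs: "length xs = 5 \<and> set xs \<subseteq> {..<p * p}"
  have pts: "set xs \<subseteq> {..<p * p}" and len: "length xs = 5" using xs by simp_all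
  obtain f where "recovery_plan (p * p) (p * p + 5 * p + 1) enc xs f"
    by (rule request_of_five_cases[OF len])
      (use recovery_plan_one_repeated[OF pts len] recovery_plan_three_points[OF pts]
         recovery_plan_two_points[OF pts] in blast)+
  then show "\<exists>R. (\<forall>j<5. R j \<subseteq> {..<p * p + 5 * p + 1}) \<and>
      (\<forall>j<5. \<forall>j'<5. j \<noteq> j' \<longrightarrow> R j \<inter> R j' = {}) \<and> (\<forall>j<5. recovers (p * p) enc (R j) (xs ! j))"
    using batch_sets_of_recovery_plan xs by metis
qed

end

lemma r_B_bounds:
  assumes "batch_code n N k E" "n \<le> N" "3 \<le> k"
  shows "n \<le> r_B n k ^ 2" "r_B n k \<le> N - n"
proof -
  let ?has_code = "\<lambda>r. \<exists>N E. n \<le> N \<and> N - n = r \<and> batch_code n N k E"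
  have ex: "?has_code (N - n)" using assms(1,2) by blast
  show "r_B n k \<le> N - n"
    unfolding r_B_def by (rule Least_le[of ?has_code, OF ex])
  from LeastI[of ?has_code, OF ex] obtain N' E' where "N' - n = r_B n k" "batch_code n N' k E'"
    unfolding r_B_def by blast
  then show "n \<le> r_B n k ^ 2"
    using batch_code_dim_le_redundancy_square assms(3) by metis
qed

theorem theorem13:
  shows "(\<forall>p::nat. prime p \<and> 5 \<le> p \<longrightarrow>
            (let n = p ^ 2; N = n + 5 * p + 1 in
               batch_code n N 5 (array_code_parity p p [0, 1, 2, 3, 4]) \<and>
               N - n = 5 * p + 1)) \<and>
         (\<exists>c1 c2 :: real. 0 < c1 \<and> 0 < c2 \<and>
            (\<forall>p::nat. prime p \<and> 5 \<le> p \<longrightarrow>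
               c1 * sqrt (real (p ^ 2)) \<le> real (r_B (p ^ 2) 5) \<and>
               real (r_B (p ^ 2) 5) \<le> c2 * sqrt (real (p ^ 2))))"
proof -
  have batch: "batch_code (p ^ 2) (p ^ 2 + 5 * p + 1) 5 (array_code_parity p p [0, 1, 2, 3, 4])"
    if "prime p" "5 \<le> p" for p :: nat
  proof -
    interpret five_slope_code p
      using that by unfold_locales
    show ?thesis
      using batch_code_enc by (simp add: enc_def power2_eq_square)
  qed
  have "real p \<le> real (r_B (p ^ 2) 5) \<and> real (r_B (p ^ 2) 5) \<le> 6 * real p"
    if "prime p" "5 \<le> p" for p :: nat
  proof -
    have "p \<le> r_B (p ^ 2) 5" "r_B (p ^ 2) 5 \<le> 6 * p"
      using r_B_bounds[OF batch[OF that]] that(2) power2_le_imp_le[of p "r_B (p ^ 2) 5"] by simp_all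
    then show ?thesis
      using of_nat_le_iff[of "r_B (p ^ 2) 5" "6 * p"] by simp
  qed
  moreover have "sqrt (real (p ^ 2)) = real p" for p :: nat
    by simp
  ultimately have "\<forall>p::nat. prime p \<and> 5 \<le> p \<longrightarrow>
      1 * sqrt (real (p ^ 2)) \<le> real (r_B (p ^ 2) 5) \<and> real (r_B (p ^ 2) 5) \<le> 6 * sqrt (real (p ^ 2))"
    by simp
  then show ?thesis
    using batch by (intro conjI allI impI exI[of _ "1::real"] exI[of _ "6::real"]) (auto simp: Let_def)
qed

end
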